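(* Let $M$ be a matroid, $\Gamma$ an ordered abelian group, $\psi\colon E(M)\to\Gamma$ a labeling, $F\subseteq\Gamma$ finite, and $B$ a basis of $M$. If $M$ has an $F$-avoiding basis, then it has an $F$-avoiding basis $B^*$ with $|B^*\setminus B|\le|F|$.
   Context: An abelian group $\Gamma$ is ordered if it carries a total order $\le$ such that $a\le b$ implies $a+c\le b+c$ for all $a,b,c$. $\psi(S):=\sum_{x\in S}\psi(x)$; a basis $B$ is $F$-avoiding if $\psi(B)\notin F$. *)

theory Defs
  imports Main
begin

definition matroid :: "'a set \<Rightarrow> ('a set \<Rightarrow> bool) \<Rightarrow> bool" where
  "matroid E indep \<longleftrightarrow>
     finite E \<and>
     indep {} \<and>
     (\<forall>X. indep X \<longrightarrow> X \<subseteq> E) \<and>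
     (\<forall>X Y. indep X \<and> Y \<subseteq> X \<longrightarrow> indep Y) \<and>
     (\<forall>X Y. indep X \<and> indep Y \<and> card X < card Y \<longrightarrow>
        (\<exists>y \<in> Y - X. indep (insert y X)))"

definition basis :: "'a set \<Rightarrow> ('a set \<Rightarrow> bool) \<Rightarrow> 'a set \<Rightarrow> bool" where
  "basis E indep B \<longleftrightarrow> indep B \<and> (\<forall>X. indep X \<and> B \<subseteq> X \<longrightarrow> X = B)"

definition avoiding :: "('a \<Rightarrow> 'g::ab_group_add) \<Rightarrow> 'g set \<Rightarrow> 'a set \<Rightarrow> bool" where
  "avoiding psi F B \<longleftrightarrow> (\<Sum>x\<in>B. psi x) \<notin> F"

end

theory Submission
  imports Defs
begin

text \<open>Take an \<open>F\<close>-avoiding basis \<open>X\<close> with \<open>|X - B|\<close> minimal. Every other basis \<open>D\<close> with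
  \<open>X \<inter> B \<subseteq> D \<subseteq> X \<union> B\<close> is closer to \<open>B\<close>, hence has \<open>\<psi>(D) \<in> F\<close>; in particular \<open>X\<close> is the only basis
  of this interval with sum \<open>\<psi>(X)\<close>. It then suffices to show: if \<open>X\<close> is the only basis of the
  interval \<open>[X \<inter> Y, X \<union> Y]\<close> with its \<open>\<psi>\<close>-sum, the interval realises at least \<open>|X - Y|\<close> sums other
  than \<open>\<psi>(X)\<close>. Let \<open>e\<close> be an element of the symmetric
  difference of maximal label, and move \<open>Y\<close> one step towards \<open>X\<close> to a basis \<open>Z\<close> whose interval
  lies inside the old one and consists of bases that all contain \<open>e\<close> (if \<open>e \<in> X\<close>) or all miss \<open>e\<close>
  (if \<open>e \<in> Y\<close>). Exchanging \<open>e\<close> out of the \<open>\<psi>\<close>-lightest basis of the new interval for a lighter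
  element (resp. into the \<open>\<psi>\<close>-heaviest one in place of a lighter element) yields a sum not
  realised in the new interval. Such a lighter exchange exists: otherwise all candidates carry
  the label of \<open>e\<close>, and a further exchange of two equally labelled elements would turn \<open>X\<close> into a
  second basis with sum \<open>\<psi>(X)\<close>.\<close>

lemma sum_exchange:
  fixes f :: "'a \<Rightarrow> 'g::ab_group_add"
  assumes "finite X" "x \<in> X" "y \<notin> X - {x}"
  shows "sum f (insert y (X - {x})) = sum f X - f x + f y"
  using assms by (simp add: sum_diff1 algebra_simps)

lemma finite_ex_maximizer:
  fixes f :: "'a \<Rightarrow> 'b::linorder"
  assumes "finite A" "A \<noteq> {}"
  shows "\<exists>a\<in>A. \<forall>b\<in>A. f b \<le> f a"
proof -
  have "Max (f ` A) \<in> f ` A" using assms by simp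
  then obtain a where "a \<in> A" "f a = Max (f ` A)" by auto
  then show ?thesis using assms(1) by (metis Max_ge finite_imageI image_eqI)
qed

lemma finite_ex_minimizer:
  fixes f :: "'a \<Rightarrow> 'b::linorder"
  assumes "finite A" "A \<noteq> {}"
  shows "\<exists>a\<in>A. \<forall>b\<in>A. f a \<le> f b"
proof -
  have "Min (f ` A) \<in> f ` A" using assms by simp
  then obtain a where "a \<in> A" "f a = Min (f ` A)" by auto
  then show ?thesis using assms(1) by (metis Min_le finite_imageI image_eqI)
qed

locale finite_matroid =
  fixes E :: "'a set" and indep :: "'a set \<Rightarrow> bool"
  assumes matroid: "matroid E indep"
begin

abbreviation is_basis :: "'a set \<Rightarrow> bool" where
  "is_basis B \<equiv> basis E indep B"

lemma finite_ground: "finite E"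
  using matroid by (simp add: matroid_def)

lemma indep_subset_ground: "indep X \<Longrightarrow> X \<subseteq> E"
  using matroid by (simp add: matroid_def)

lemma indep_finite: "indep X \<Longrightarrow> finite X"
  using indep_subset_ground finite_ground finite_subset by blast

lemma indep_subset: "indep X \<Longrightarrow> Y \<subseteq> X \<Longrightarrow> indep Y"
  using matroid unfolding matroid_def by blast

lemma indep_augment: "indep X \<Longrightarrow> indep Y \<Longrightarrow> card X < card Y \<Longrightarrow> \<exists>y\<in>Y - X. indep (insert y X)"
  using matroid unfolding matroid_def by blast

lemma basis_indep: "is_basis B \<Longrightarrow> indep B"
  by (simp add: basis_def)

lemma basis_finite: "is_basis B \<Longrightarrow> finite B"
  using basis_indep indep_finite by blast

lemma finite_bases: "finite {B. is_basis B}"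
  using finite_ground basis_indep indep_subset_ground
  by (metis (mono_tags, lifting) Pow_iff finite_Pow_iff finite_subset mem_Collect_eq subsetI)

lemma card_indep_le_basis:
  assumes "is_basis B" "indep X"
  shows "card X \<le> card B"
proof (rule ccontr)
  assume "\<not> card X \<le> card B"
  then obtain y where "y \<in> X - B" "indep (insert y B)"
    using indep_augment assms basis_indep by force
  then show False using assms(1) unfolding basis_def by blast
qed

lemma basis_card_eq: "is_basis A \<Longrightarrow> is_basis B \<Longrightarrow> card A = card B"
  using card_indep_le_basis basis_indep le_antisym by metis

lemma basis_if_card_ge:
  assumes "is_basis B" "indep Z" "card B \<le> card Z"
  shows "is_basis Z"
  unfolding basis_def
proof (intro conjI allI impI)
  fix W assume W: "indep W \<and> Z \<subseteq> W"
  then have "card W \<le> card Z" using card_indep_le_basis assms(1,3) by fastforce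
  then show "W = Z" using card_seteq W indep_finite by blast
qed (fact assms)

lemma basis_subset_eq: "is_basis B \<Longrightarrow> indep X \<Longrightarrow> B \<subseteq> X \<Longrightarrow> X = B"
  by (simp add: basis_def)

lemma basis_eq_exchange_if_subset:
  assumes Z: "is_basis Z" and X: "is_basis X" and x: "x \<in> X" and sub: "Z \<subseteq> insert y (X - {x})"
  shows "Z = insert y (X - {x})"
proof -
  have fin: "finite X" using X basis_finite by blast
  have "card (insert y (X - {x})) \<le> Suc (card (X - {x}))" using fin by (simp add: card_insert_if)
  also have "\<dots> = card Z" using card_Suc_Diff1[OF fin x] basis_card_eq[OF Z X] by simp
  finally show ?thesis using card_seteq[OF _ sub] fin by simp
qed

lemma basis_exchange_if_indep:
  assumes "is_basis D" "w \<in> D" "x \<notin> D" "indep (insert x (D - {w}))"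
  shows "is_basis (insert x (D - {w}))"
proof -
  have "finite D" "card D > 0" using assms(1,2) basis_finite card_gt_0_iff by blast+
  then have "card (insert x (D - {w})) = card D" using assms(2,3) by simp
  then show ?thesis using basis_if_card_ge assms(1,4) by simp
qed

lemma indep_extend_within:
  assumes "indep A" "indep B"
  shows "\<exists>I. indep I \<and> A \<subseteq> I \<and> I \<subseteq> A \<union> B \<and> card B \<le> card I"
proof -
  let ?between = "{I. indep I \<and> A \<subseteq> I \<and> I \<subseteq> A \<union> B}"
  have "finite ?between"
    using indep_finite assms by (simp add: finite_subset[of _ "Pow (A \<union> B)"] subset_iff)
  moreover have "A \<in> ?between" using assms(1) by blast
  ultimately obtain I where I: "I \<in> ?between" and largest: "\<forall>J\<in>?between. card J \<le> card I"
    using finite_ex_maximizer[of ?between card] by blast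
  have "card B \<le> card I"
  proof (rule ccontr)
    assume "\<not> card B \<le> card I"
    then obtain y where y: "y \<in> B - I" "indep (insert y I)"
      using indep_augment I assms(2) by force
    then have "insert y I \<in> ?between" using I by blast
    moreover have "card (insert y I) = Suc (card I)" using y I indep_finite by simp
    ultimately show False using largest by fastforce
  qed
  then show ?thesis using I by blast
qed

lemma indep_extend_to_basis:
  assumes "indep A" "is_basis B"
  shows "\<exists>Z. is_basis Z \<and> A \<subseteq> Z \<and> Z \<subseteq> A \<union> B"
  using indep_extend_within[OF assms(1) basis_indep[OF assms(2)]] basis_if_card_ge[OF assms(2)]
  by blast

text \<open>The hypothesis puts \<open>A\<close> into the closure of \<open>J\<close> and \<open>y\<close> outside it; as closures are
  closed, \<open>y\<close> then lies outside the closure of \<open>A\<close>.\<close>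

lemma indep_insert_if_spans:
  assumes J: "indep J" and A: "indep A" and spans: "\<forall>a\<in>A. a \<in> J \<or> \<not> indep (insert a J)"
    and y: "y \<notin> J" "indep (insert y J)"
  shows "indep (insert y A)"
proof -
  have small: "card I \<le> card J" if I: "indep I" "I \<subseteq> A \<union> J" for I
  proof (rule ccontr)
    assume "\<not> card I \<le> card J"
    then obtain i where "i \<in> I - J" "indep (insert i J)" using indep_augment J I(1) by force
    then show False using spans I(2) by blast
  qed
  obtain I where I: "indep I" "A \<subseteq> I" "I \<subseteq> A \<union> insert y J" "card (insert y J) \<le> card I"
    using indep_extend_within[OF A y(2)] by blast
  have "card (insert y J) = Suc (card J)" using y(1) J indep_finite by simp
  then have "y \<in> I" using small[of I] I by fastforce
  then show ?thesis using I(1,2) indep_subset by blast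
qed

lemma not_indep_insert_exchangeable:
  assumes D: "is_basis D" and e: "e \<notin> D"
  shows "\<not> indep (insert e {w \<in> D. indep (insert e (D - {w}))})"
    (is "\<not> indep ?C")
proof
  assume "indep ?C"
  then obtain Z where Z: "is_basis Z" "?C \<subseteq> Z" "Z \<subseteq> ?C \<union> D"
    using indep_extend_to_basis[OF _ D] by blast
  have "e \<in> Z" using Z(2) by blast
  then have "\<not> D \<subseteq> Z" using basis_subset_eq[OF D basis_indep[OF Z(1)]] e by blast
  then obtain w where w: "w \<in> D" "w \<notin> Z" by blast
  have "Z \<subseteq> insert e (D - {w})" using Z(3) w(2) by auto
  then have "Z = insert e (D - {w})" using basis_eq_exchange_if_subset[OF Z(1) D w(1)] by blast
  then have "indep (insert e (D - {w}))" using Z(1) basis_indep by simp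
  then show False using Z(2) w by blast
qed

lemma indep_exchange_from_dependent:
  assumes X: "indep X" and x: "x \<in> X" and K: "\<not> indep K" "indep (K - {x})"
  shows "\<exists>z\<in>K - X. indep (insert z (X - {x}))"
proof (rule ccontr)
  assume none: "\<not> ?thesis"
  have "indep (insert x (K - {x}))"
  proof (rule indep_insert_if_spans)
    show "indep (X - {x})" "indep (insert x (X - {x}))" using X x indep_subset by (auto simp: insert_absorb)
    show "\<forall>a\<in>K - {x}. a \<in> X - {x} \<or> \<not> indep (insert a (X - {x}))" using none by blast
  qed (use K in auto)
  then show False using K(1) indep_subset by blast
qed

lemma basis_exchange_outside_span:
  assumes X: "is_basis X" and J: "indep J" and y: "y \<notin> J" "y \<notin> X" "indep (insert y J)"
  shows "\<exists>x\<in>X - J. indep (insert x J) \<and> is_basis (insert y (X - {x}))"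
proof -
  define A where "A = {x \<in> X. x \<in> J \<or> \<not> indep (insert x J)}"
  have "indep A" using indep_subset[OF basis_indep[OF X]] A_def by auto
  then have "indep (insert y A)" using indep_insert_if_spans[OF J _ _ y(1,3)] A_def by blast
  then obtain Z where Z: "is_basis Z" "insert y A \<subseteq> Z" "Z \<subseteq> insert y A \<union> X"
    using indep_extend_to_basis[OF _ X] by blast
  have "\<not> X \<subseteq> Z" using basis_subset_eq[OF X basis_indep[OF Z(1)]] Z(2) y(2) by blast
  then obtain x where x: "x \<in> X" "x \<notin> Z" by blast
  have "Z \<subseteq> insert y (X - {x})" using Z(3) x(2) A_def by auto
  then have "Z = insert y (X - {x})" using basis_eq_exchange_if_subset[OF Z(1) X x(1)] by blast
  moreover have "x \<notin> A" using x(2) Z(2) by blast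
  ultimately show ?thesis using x(1) Z(1) A_def by blast
qed

definition basis_interval :: "'a set \<Rightarrow> 'a set \<Rightarrow> 'a set set" where
  "basis_interval X Y = {D. is_basis D \<and> X \<inter> Y \<subseteq> D \<and> D \<subseteq> X \<union> Y}"

definition sum_isolated :: "('a \<Rightarrow> 'g::ab_group_add) \<Rightarrow> 'a set \<Rightarrow> 'a set \<Rightarrow> bool" where
  "sum_isolated psi X Y \<longleftrightarrow> (\<forall>D\<in>basis_interval X Y. sum psi D = sum psi X \<longrightarrow> D = X)"

lemma finite_basis_interval: "finite (basis_interval X Y)"
  using finite_bases by (auto simp: basis_interval_def intro: finite_subset)

lemma basis_interval_left: "is_basis X \<Longrightarrow> X \<in> basis_interval X Y"
  by (auto simp: basis_interval_def)

lemma basis_interval_mono: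
  "X \<inter> Y \<subseteq> X \<inter> Z \<Longrightarrow> X \<union> Z \<subseteq> X \<union> Y \<Longrightarrow> basis_interval X Z \<subseteq> basis_interval X Y"
  by (auto simp: basis_interval_def)

lemma sum_isolated_swap_neq:
  assumes iso: "sum_isolated psi X Y" and X: "is_basis X"
    and x: "x \<in> X - Y" and y: "y \<in> Y - X" and Z: "is_basis (insert y (X - {x}))"
  shows "psi x \<noteq> psi y"
proof
  assume "psi x = psi y"
  then have "sum psi (insert y (X - {x})) = sum psi X"
    using sum_exchange[of X x y psi] basis_finite[OF X] x y by simp
  moreover have "insert y (X - {x}) \<in> basis_interval X Y" using Z x y by (auto simp: basis_interval_def)
  ultimately show False using iso y unfolding sum_isolated_def by blast
qed

context
  fixes psi :: "'a \<Rightarrow> 'g::linordered_ab_group_add" and X Y :: "'a set" and e :: 'a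
  assumes X: "is_basis X" and Y: "is_basis Y" and iso: "sum_isolated psi X Y"
    and heaviest: "\<forall>u\<in>(X \<union> Y) - (X \<inter> Y). psi u \<le> psi e"
begin

lemma exchange_heaviest_out:
  assumes e: "e \<in> X - Y" and D: "D \<in> basis_interval X Y" and eD: "e \<in> D"
  shows "\<exists>z\<in>(X \<union> Y) - D. psi z < psi e \<and> is_basis (insert z (D - {e}))"
proof (rule ccontr)
  assume "\<not> ?thesis"
  then have heavier: "psi e \<le> psi z" if "z \<in> (X \<union> Y) - D" "is_basis (insert z (D - {e}))" for z
    using that not_le by blast
  have bD: "is_basis D" and S: "X \<inter> Y \<subseteq> D" using D by (auto simp: basis_interval_def)
  define J where "J = D - {e}"
  have J: "indep J" using indep_subset[OF basis_indep[OF bD]] J_def by blast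
  have S_J: "X \<inter> Y \<subseteq> J" using S e J_def by blast
  have equal: "psi u = psi e" if u: "u \<in> X \<union> Y" "u \<notin> J" "indep (insert u J)" for u
  proof (cases "u = e")
    case False
    then have "u \<notin> D" using u(2) J_def by blast
    then have "is_basis (insert u J)" using basis_exchange_if_indep[OF bD eD] u(3) J_def by simp
    then have "psi e \<le> psi u" using heavier u(1) \<open>u \<notin> D\<close> J_def by blast
    moreover have "psi u \<le> psi e" using heaviest u(1) \<open>u \<notin> D\<close> S by blast
    ultimately show ?thesis by simp
  qed simp
  have "card J < card D" using card_Diff1_less[OF basis_finite[OF bD] eD] J_def by simp
  then have "card J < card Y" using basis_card_eq[OF bD Y] by simp
  then obtain y where y: "y \<in> Y - J" "indep (insert y J)"
    using indep_augment[OF J basis_indep[OF Y]] by blast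
  have "y \<notin> X" using y(1) S_J by blast
  then obtain x where x: "x \<in> X - J" "indep (insert x J)" "is_basis (insert y (X - {x}))"
    using basis_exchange_outside_span[OF X J _ _ y(2)] y(1) by blast
  have "x \<in> X - Y" using x(1) S_J by blast
  moreover have "y \<in> Y - X" using y(1) \<open>y \<notin> X\<close> by blast
  moreover have "psi x = psi e" using equal x(1,2) by blast
  moreover have "psi y = psi e" using equal y by blast
  ultimately show False using sum_isolated_swap_neq[OF iso X _ _ x(3)] by simp
qed

lemma exchange_heaviest_in:
  assumes e: "e \<in> Y - X" and D: "D \<in> basis_interval X Y" and eD: "e \<notin> D"
  shows "\<exists>w\<in>D - (X \<inter> Y). psi w < psi e \<and> is_basis (insert e (D - {w}))"
proof (rule ccontr)
  assume "\<not> ?thesis"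
  then have heavier: "psi e \<le> psi w" if "w \<in> D - (X \<inter> Y)" "is_basis (insert e (D - {w}))" for w
    using that not_le by blast
  have bD: "is_basis D" and S: "X \<inter> Y \<subseteq> D" and DU: "D \<subseteq> X \<union> Y"
    using D by (auto simp: basis_interval_def)
  have equal: "psi w = psi e" if w: "w \<in> D - (X \<inter> Y)" "indep (insert e (D - {w}))" for w
  proof -
    have "is_basis (insert e (D - {w}))" using basis_exchange_if_indep[OF bD _ eD] w by blast
    then have "psi e \<le> psi w" using heavier w(1) by blast
    moreover have "psi w \<le> psi e" using heaviest w(1) DU by blast
    ultimately show ?thesis by simp
  qed
  \<comment> \<open>\<open>C \<union> (X \<inter> Y)\<close> contains the fundamental circuit of \<open>e\<close> with respect to \<open>D\<close>.\<close>
  define C where "C = insert e {w \<in> D - (X \<inter> Y). indep (insert e (D - {w}))}"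
  have "insert e {w \<in> D. indep (insert e (D - {w}))} \<subseteq> C \<union> (X \<inter> Y)"
    unfolding C_def by blast
  then have dep: "\<not> indep (C \<union> (X \<inter> Y))"
    using not_indep_insert_exchangeable[OF bD eD] indep_subset by blast
  have "\<not> C \<subseteq> Y"
  proof
    assume "C \<subseteq> Y"
    then have "C \<union> (X \<inter> Y) \<subseteq> Y" by blast
    then show False using dep indep_subset[OF basis_indep[OF Y]] by blast
  qed
  then obtain x where "x \<in> C" "x \<notin> Y" by blast
  then have x_D: "x \<in> D - (X \<inter> Y)" and x_exch: "indep (insert e (D - {x}))"
    using C_def e by auto
  then have x: "x \<in> X - Y" using DU \<open>x \<notin> Y\<close> by blast
  have "C \<union> (X \<inter> Y) - {x} \<subseteq> insert e (D - {x})" using C_def S by blast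
  then have "indep (C \<union> (X \<inter> Y) - {x})" using indep_subset[OF x_exch] by blast
  then obtain z where z: "z \<in> C \<union> (X \<inter> Y) - X" "indep (insert z (X - {x}))"
    using indep_exchange_from_dependent[OF basis_indep[OF X] _ dep] x by blast
  then have "z \<in> C" "z \<notin> X" by blast+
  then have "z \<in> Y - X" using C_def DU e by blast
  moreover have "is_basis (insert z (X - {x}))"
    using basis_exchange_if_indep[OF X _ \<open>z \<notin> X\<close> z(2)] x by blast
  moreover have "psi z = psi e" using equal \<open>z \<in> C\<close> C_def by auto
  moreover have "psi x = psi e" using equal[OF x_D x_exch] .
  ultimately show False using sum_isolated_swap_neq[OF iso X x] by metis
qed

lemma interval_step_heaviest_out:
  assumes e: "e \<in> X - Y"
  shows "\<exists>Z. is_basis Z \<and> X \<inter> Z = insert e (X \<inter> Y) \<and> X \<union> Z \<subseteq> X \<union> Y \<and>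
    \<not> sum psi ` basis_interval X Y \<subseteq> sum psi ` basis_interval X Z"
proof -
  have "indep (insert e (X \<inter> Y))"
    by (rule indep_subset[OF basis_indep[OF X]]) (use e in blast)
  then obtain Z where Z: "is_basis Z" "insert e (X \<inter> Y) \<subseteq> Z" "Z \<subseteq> insert e (X \<inter> Y) \<union> Y"
    using indep_extend_to_basis[OF _ Y] by blast
  have XZ: "X \<inter> Z = insert e (X \<inter> Y)" and XZ_sub: "X \<union> Z \<subseteq> X \<union> Y"
    using Z e by auto
  then have sub: "basis_interval X Z \<subseteq> basis_interval X Y" using basis_interval_mono by blast
  obtain D where D: "D \<in> basis_interval X Z"
    and lightest: "\<forall>D'\<in>basis_interval X Z. sum psi D \<le> sum psi D'"
    using finite_ex_minimizer[OF finite_basis_interval] basis_interval_left[OF X] by blast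
  have eD: "e \<in> D" and DU: "D \<subseteq> X \<union> Y" and S: "X \<inter> Y \<subseteq> D" and fin: "finite D"
    using D XZ XZ_sub basis_finite by (auto simp: basis_interval_def)
  obtain z where z: "z \<in> (X \<union> Y) - D" "psi z < psi e" "is_basis (insert z (D - {e}))"
    using exchange_heaviest_out[OF e _ eD] D sub by blast
  let ?D = "insert z (D - {e})"
  have "?D \<in> basis_interval X Y"
    unfolding basis_interval_def using z(1,3) S DU e by blast
  moreover have "sum psi ?D < sum psi D"
    using sum_exchange[OF fin eD, of z psi] z(1,2) by simp
  then have "sum psi ?D \<notin> sum psi ` basis_interval X Z" using lightest leD by fastforce
  ultimately show ?thesis using Z(1) XZ XZ_sub by blast
qed

lemma interval_step_heaviest_in:
  assumes e: "e \<in> Y - X"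
  shows "\<exists>Z. \<exists>x\<in>X - Y. is_basis Z \<and> X \<inter> Z = insert x (X \<inter> Y) \<and> X \<union> Z \<subseteq> X \<union> Y \<and>
    \<not> sum psi ` basis_interval X Y \<subseteq> sum psi ` basis_interval X Z"
proof -
  have "card (Y - {e}) < card X"
    using card_Diff1_less[OF basis_finite[OF Y], of e] e basis_card_eq[OF X Y] by simp
  then obtain x where x: "x \<in> X - (Y - {e})" "indep (insert x (Y - {e}))"
    using indep_augment[OF indep_subset[OF basis_indep[OF Y]] basis_indep[OF X]] by blast
  let ?Z = "insert x (Y - {e})"
  have "x \<in> X - Y" using x(1) e by blast
  then have Z: "is_basis ?Z" using basis_exchange_if_indep[OF Y _ _ x(2)] e by blast
  have XZ: "X \<inter> ?Z = insert x (X \<inter> Y)" and XZ_sub: "X \<union> ?Z \<subseteq> X \<union> Y"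
    using \<open>x \<in> X - Y\<close> e by auto
  then have sub: "basis_interval X ?Z \<subseteq> basis_interval X Y" using basis_interval_mono by blast
  obtain D where D: "D \<in> basis_interval X ?Z"
    and heaviest_sum: "\<forall>D'\<in>basis_interval X ?Z. sum psi D' \<le> sum psi D"
    using finite_ex_maximizer[OF finite_basis_interval] basis_interval_left[OF X] by blast
  have eD: "e \<notin> D" and S: "X \<inter> Y \<subseteq> D" and fin: "finite D"
    using D XZ e basis_finite by (auto simp: basis_interval_def)
  obtain w where w: "w \<in> D - (X \<inter> Y)" "psi w < psi e" "is_basis (insert e (D - {w}))"
    using exchange_heaviest_in[OF e _ eD] D sub by blast
  let ?D = "insert e (D - {w})"
  have "?D \<in> basis_interval X Y"
    unfolding basis_interval_def using w(1,3) S sub D e by (auto simp: basis_interval_def)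
  moreover have "sum psi D < sum psi ?D"
    using sum_exchange[OF fin _, of w e psi] w(1,2) eD by simp
  then have "sum psi ?D \<notin> sum psi ` basis_interval X ?Z" using heaviest_sum leD by fastforce
  ultimately show ?thesis using Z \<open>x \<in> X - Y\<close> XZ XZ_sub by blast
qed

end

lemma sum_isolated_shrink:
  fixes psi :: "'a \<Rightarrow> 'g::linordered_ab_group_add"
  assumes X: "is_basis X" and Y: "is_basis Y" and iso: "sum_isolated psi X Y" and "X \<noteq> Y"
  shows "\<exists>Z. is_basis Z \<and> card (X - Y) = Suc (card (X - Z)) \<and> sum_isolated psi X Z \<and>
    card (sum psi ` basis_interval X Z - {sum psi X}) < card (sum psi ` basis_interval X Y - {sum psi X})"
proof -
  let ?R = "(X \<union> Y) - (X \<inter> Y)"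
  have "?R \<noteq> {}" using \<open>X \<noteq> Y\<close> by blast
  moreover have "finite ?R" using basis_finite X Y by blast
  ultimately obtain e where e: "e \<in> ?R" and heaviest: "\<forall>u\<in>?R. psi u \<le> psi e"
    using finite_ex_maximizer by blast
  obtain Z x where Z: "is_basis Z" and x: "x \<in> X - Y"
    and XZ: "X \<inter> Z = insert x (X \<inter> Y)" and XZ_sub: "X \<union> Z \<subseteq> X \<union> Y"
    and new: "\<not> sum psi ` basis_interval X Y \<subseteq> sum psi ` basis_interval X Z"
  proof (cases "e \<in> X")
    case True
    then show ?thesis using interval_step_heaviest_out[OF X Y iso heaviest] e that by blast
  next
    case False
    then show ?thesis using interval_step_heaviest_in[OF X Y iso heaviest] e that by blast
  qed
  have "X - Z = (X - Y) - {x}" using XZ x by blast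
  then have "card (X - Y) = Suc (card (X - Z))"
    using card_Suc_Diff1[of "X - Y" x] x basis_finite[OF X] by simp
  moreover have sub: "basis_interval X Z \<subseteq> basis_interval X Y"
    using basis_interval_mono XZ XZ_sub by blast
  then have "sum_isolated psi X Z" using iso by (auto simp: sum_isolated_def)
  moreover have "sum psi ` basis_interval X Z - {sum psi X} \<subset> sum psi ` basis_interval X Y - {sum psi X}"
    using sub new basis_interval_left[OF X] by blast
  then have "card (sum psi ` basis_interval X Z - {sum psi X}) < card (sum psi ` basis_interval X Y - {sum psi X})"
    by (rule psubset_card_mono[rotated]) (simp add: finite_basis_interval)
  ultimately show ?thesis using Z by blast
qed

lemma card_diff_le_card_interval_sums:
  fixes psi :: "'a \<Rightarrow> 'g::linordered_ab_group_add"
  assumes X: "is_basis X" and "is_basis Y" "sum_isolated psi X Y"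
  shows "card (X - Y) \<le> card (sum psi ` basis_interval X Y - {sum psi X})"
  using assms(2,3)
proof (induction "card (X - Y)" arbitrary: Y rule: less_induct)
  case less
  show ?case
  proof (cases "X = Y")
    case False
    then obtain Z where Z: "is_basis Z" "card (X - Y) = Suc (card (X - Z))" "sum_isolated psi X Z"
      and fewer: "card (sum psi ` basis_interval X Z - {sum psi X})
        < card (sum psi ` basis_interval X Y - {sum psi X})"
      using sum_isolated_shrink[OF X less.prems] by blast
    then have "card (X - Z) \<le> card (sum psi ` basis_interval X Z - {sum psi X})"
      using less.hyps by simp
    then show ?thesis using Z(2) fewer by linarith
  qed simp
qed

lemma card_diff_less_if_mem_basis_interval:
  assumes X: "is_basis X" and D: "D \<in> basis_interval X B" "D \<noteq> X"
  shows "card (D - B) < card (X - B)"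
proof -
  have bD: "is_basis D" and S: "X \<inter> B \<subseteq> D" and DU: "D \<subseteq> X \<union> B"
    using D(1) by (auto simp: basis_interval_def)
  have "D - B \<subseteq> X - B" using DU by blast
  moreover have "D - B \<noteq> X - B"
  proof
    assume "D - B = X - B"
    then have "X \<subseteq> D" using S by blast
    then show False using basis_subset_eq[OF X basis_indep[OF bD]] D(2) by simp
  qed
  ultimately show ?thesis using psubset_card_mono basis_finite[OF X] by blast
qed

end

theorem theorem5p5:
  fixes E :: "'a set" and indep :: "'a set \<Rightarrow> bool"
    and psi :: "'a \<Rightarrow> 'g::linordered_ab_group_add"
    and F :: "'g set" and B :: "'a set"
  assumes "matroid E indep"
    and "finite F"
    and "basis E indep B"
    and "\<exists>B'. basis E indep B' \<and> avoiding psi F B'"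
  shows "\<exists>Bs. basis E indep Bs \<and> avoiding psi F Bs \<and> card (Bs - B) \<le> card F"
proof -
  interpret finite_matroid E indep using assms(1) by unfold_locales
  let ?avoiding_basis = "\<lambda>D. basis E indep D \<and> avoiding psi F D"
  obtain X where X: "?avoiding_basis X"
    and closest: "\<And>D. ?avoiding_basis D \<Longrightarrow> card (X - B) \<le> card (D - B)"
    using ex_has_least_nat[of ?avoiding_basis _ "\<lambda>D. card (D - B)"] assms(4) by blast
  have in_F: "sum psi D \<in> F" if "D \<in> basis_interval X B" "D \<noteq> X" for D
    using closest[of D] card_diff_less_if_mem_basis_interval[OF _ that] X that(1)
    by (fastforce simp: basis_interval_def avoiding_def)
  have "sum_isolated psi X B"
    unfolding sum_isolated_def
  proof (intro ballI impI, rule ccontr)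
    fix D assume "D \<in> basis_interval X B" "sum psi D = sum psi X" "D \<noteq> X"
    then show False using in_F[of D] X by (simp add: avoiding_def)
  qed
  then have "card (X - B) \<le> card (sum psi ` basis_interval X B - {sum psi X})"
    using card_diff_le_card_interval_sums X assms(3) by blast
  also have "\<dots> \<le> card F" using in_F by (intro card_mono[OF assms(2)]) auto
  finally show ?thesis using X by blast
qed

end
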